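(* Let $n\ge3$ and let $A$ be a set of $m$ vertices of $C_n$ with $2\le m\le n$. The following are equivalent: (1) $A$ is a maximizer of $W$ on $C_n$; (2) $A$ is a local maximizer of $W$ on $C_n$; (3) if $m$ is odd then $\mathrm{supp}(\sigma^*_{\lfloor m/2\rfloor}(A))\subseteq\{1,\dots,\lfloor n/2\rfloor\}$, and if $m$ is even then $\mathrm{supp}(\sigma^*_{m/2}(A))\subseteq\{\lfloor n/2\rfloor,\lceil n/2\rceil\}$; (4) for all integers $k$ with $1\le k<\frac m2$ we have $\sigma_k(A)=\sigma^*_k(A)$, and, if $m$ is even, $\mathrm{supp}(\sigma_{m/2}(A))=\{\lfloor n/2\rfloor\}$.
   Context: $C_n$ has vertex set $\{0,\dots,n-1\}$ with $i$ adjacent to $i+1\bmod n$. $d(u,v)$ is geodesic distance; $d^*(u,v)$ is the least non-negative integer congruent to $v-u$ mod $n$. $W(A)=\sum_{\{u,v\}\subseteq A,u\ne v}d(u,v)$ over unordered pairs. $A$ is a maximizer of $W$ if $W(A)=\max\{W(B):|B|=|A|\}$; a perturbation of $A$ is $(A\setminus\{u\})\cup\{v\}$ with $u\in A$, $v\notin A$, $uv$ an edge, and $A$ is a local maximizer if $W(A)\ge W(B)$ for every perturbation $B$. For $A=\{a_0<\dots<a_{m-1}\}$, $\mathrm{span}_A(a_i,a_j)$ is the least positive integer congruent to $j-i$ mod $m$; $\sigma_k(A)=[\,d(u,v):u,v\in A,u\ne v,\mathrm{span}_A(u,v)=k\,]$ and $\sigma^*_k(A)=[\,d^*(u,v):u,v\in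 A,u\ne v,\mathrm{span}_A(u,v)=k\,]$ are multisets over ordered pairs; $\mathrm{supp}$ denotes the underlying set of a multiset. *)

theory Defs
  imports Main "HOL-Library.Multiset"
begin

text \<open>The cycle C_n has vertex set {0..<n}; i adjacent to (i+1) mod n.\<close>

definition cyc_adj :: "nat \<Rightarrow> nat \<Rightarrow> nat \<Rightarrow> bool" where
  "cyc_adj n u v \<longleftrightarrow> v = (u + 1) mod n \<or> u = (v + 1) mod n"

definition dstar :: "nat \<Rightarrow> nat \<Rightarrow> nat \<Rightarrow> nat" where
  "dstar n u v = nat ((int v - int u) mod int n)"

definition cdist :: "nat \<Rightarrow> nat \<Rightarrow> nat \<Rightarrow> nat" where
  "cdist n u v = min (dstar n u v) (dstar n v u)"

definition W :: "nat \<Rightarrow> nat set \<Rightarrow> nat" where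
  "W n A = (\<Sum>(u,v)\<in>{(u,v). u \<in> A \<and> v \<in> A \<and> u < v}. cdist n u v)"

definition is_maximizer :: "nat \<Rightarrow> nat set \<Rightarrow> bool" where
  "is_maximizer n A \<longleftrightarrow>
     (\<forall>B. B \<subseteq> {0..<n} \<and> card B = card A \<longrightarrow> W n B \<le> W n A)"

definition perturbation :: "nat \<Rightarrow> nat set \<Rightarrow> nat set \<Rightarrow> bool" where
  "perturbation n A B \<longleftrightarrow>
     (\<exists>u v. u \<in> A \<and> v \<in> {0..<n} \<and> v \<notin> A \<and> cyc_adj n u v \<and> B = (A - {u}) \<union> {v})"

definition is_local_maximizer :: "nat \<Rightarrow> nat set \<Rightarrow> bool" where
  "is_local_maximizer n A \<longleftrightarrow> (\<forall>B. perturbation n A B \<longrightarrow> W n B \<le> W n A)"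

definition idx :: "nat set \<Rightarrow> nat \<Rightarrow> nat" where
  "idx A a = card {x \<in> A. x < a}"

definition span :: "nat set \<Rightarrow> nat \<Rightarrow> nat \<Rightarrow> nat" where
  "span A u v = (let r = nat ((int (idx A v) - int (idx A u)) mod int (card A))
                 in if r = 0 then card A else r)"

definition span_pairs :: "nat set \<Rightarrow> nat \<Rightarrow> (nat \<times> nat) set" where
  "span_pairs A k = {(u,v). u \<in> A \<and> v \<in> A \<and> u \<noteq> v \<and> span A u v = k}"

definition sigma :: "nat \<Rightarrow> nat set \<Rightarrow> nat \<Rightarrow> nat multiset" where
  "sigma n A k = image_mset (\<lambda>(u,v). cdist n u v) (mset_set (span_pairs A k))"

definition sigma_star :: "nat \<Rightarrow> nat set \<Rightarrow> nat \<Rightarrow> nat multiset" where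
  "sigma_star n A k = image_mset (\<lambda>(u,v). dstar n u v) (mset_set (span_pairs A k))"

end

theory Submission
  imports Defs
begin

text \<open>
  Write \<open>A = {a\<^sub>0 < \<dots> < a\<^sub>m\<^sub>-\<^sub>1}\<close> and extend the indices periodically. The forward gaps
  \<open>g\<^sub>i(k) = d*(a\<^sub>i, a\<^sub>i\<^sub>+\<^sub>k)\<close> satisfy \<open>\<Sum>\<^sub>i g\<^sub>i(k) = k n\<close>, because the \<open>m\<close> arcs from \<open>a\<^sub>i\<close> to
  \<open>a\<^sub>i\<^sub>+\<^sub>k\<close> wind \<open>k\<close> times around the cycle. The pairs of span \<open>k\<close> contribute
  \<open>\<Sum>\<^sub>i min(g\<^sub>i(k), n - g\<^sub>i(k))\<close> to \<open>2W(A)\<close>, which is at most \<open>kn\<close> for \<open>2k < m\<close>,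
  at most \<open>m\<lfloor>n/2\<rfloor>\<close> for \<open>2k = m\<close> and at most \<open>(m - k)n\<close> for \<open>2k > m\<close>. These bounds do not
  depend on \<open>A\<close>, and they are attained exactly when condition (4) holds, so (4) makes \<open>A\<close> a
  maximizer.

  Conversely, suppose \<open>A\<close> is a local maximizer but some half-span gap \<open>g\<^sub>i(\<lfloor>m/2\<rfloor>)\<close> is too
  long. If \<open>a\<^sub>i + 1 \<notin> A\<close>, moving \<open>a\<^sub>i\<close> one step forward shortens every gap \<open>g\<^sub>i(l)\<close> by one and
  increases \<open>W\<close>: at most \<open>\<lfloor>m/2\<rfloor> - 1\<close> distances shrink, while at least \<open>\<lfloor>m/2\<rfloor>\<close> grow. Hence
  \<open>a\<^sub>i\<^sub>+\<^sub>1 = a\<^sub>i + 1\<close>, and then the long gap at \<open>i\<close> forces a long gap at \<open>i + 1\<close>. So all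
  half-span gaps are long, contradicting \<open>\<Sum>\<^sub>i g\<^sub>i(\<lfloor>m/2\<rfloor>) = \<lfloor>m/2\<rfloor> n\<close>. This gives (3),
  and (3) implies (4) because gaps grow with the span.
\<close>

lemma dstar_eqI:
  assumes "t < n" "int v mod int n = (int u + int t) mod int n"
  shows "dstar n u v = t"
proof -
  have "(int v - int u) mod int n = ((int u + int t) - int u) mod int n"
    using assms(2) by (metis mod_diff_left_eq)
  also have "\<dots> = int t" using assms(1) by simp
  finally show ?thesis unfolding dstar_def by simp
qed

lemma dstar_self [simp]: "dstar n u u = 0"
  unfolding dstar_def by simp

lemma cdist_self [simp]: "cdist n u u = 0"
  unfolding cdist_def by simp

lemma cdist_commute: "cdist n u v = cdist n v u"
  unfolding cdist_def by simp

lemma dstar_swap: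
  assumes "0 < n" "0 < dstar n u v"
  shows "dstar n v u = n - dstar n u v"
proof -
  have nonzero: "(int v - int u) mod int n \<noteq> 0" using assms unfolding dstar_def by auto
  have "(int u - int v) mod int n = int n - (int v - int u) mod int n"
    using zmod_zminus1_eq_if[of "int v - int u" "int n"] nonzero
    by (simp only: minus_diff_eq if_False)
  moreover have "0 \<le> (int v - int u) mod int n" "(int v - int u) mod int n \<le> int n"
    using assms(1) by (simp_all add: order.strict_implies_order)
  ultimately show ?thesis unfolding dstar_def by (simp add: nat_diff_distrib)
qed

lemma double_W:
  assumes "finite C"
  shows "2 * W n C = (\<Sum>u\<in>C. \<Sum>v\<in>C. cdist n u v)"
proof -
  define f where "f = (\<lambda>(u, v). cdist n u v)"
  define below where "below = {(u, v). u \<in> C \<and> v \<in> C \<and> u < v}"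
  define above where "above = {(u, v). u \<in> C \<and> v \<in> C \<and> v < u}"
  define diag where "diag = {(u, v). u \<in> C \<and> v \<in> C \<and> u = v}"
  have fin: "finite (C \<times> C)" using assms by simp
  have split: "C \<times> C = below \<union> (above \<union> diag)"
    unfolding below_def above_def diag_def by auto
  have "finite below" "finite above" "finite diag"
    using fin unfolding below_def above_def diag_def by (auto intro: finite_subset[OF _ fin])
  then have "(\<Sum>u\<in>C. \<Sum>v\<in>C. cdist n u v) = sum f below + (sum f above + sum f diag)"
    unfolding sum.cartesian_product f_def[symmetric] split
    by (simp add: sum.union_disjoint below_def above_def diag_def disjoint_iff)
  also have "sum f diag = 0"
    unfolding diag_def f_def by (intro sum.neutral) auto
  also have "above = prod.swap ` below"
    unfolding below_def above_def by auto
  also have "sum f (prod.swap ` below) = sum f below"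
    by (simp add: sum.reindex f_def cdist_commute case_prod_unfold)
  finally show ?thesis unfolding W_def below_def f_def by simp
qed

lemma double_W_insert:
  assumes "finite C" "x \<notin> C"
  shows "2 * W n (insert x C) = 2 * W n C + 2 * (\<Sum>b\<in>C. cdist n x b)"
  using assms by (simp add: double_W sum.distrib cdist_commute[of n _ x])

lemma local_maximizer_move:
  assumes "is_local_maximizer n A" "finite A" "u \<in> A" "v < n" "v \<notin> A" "cyc_adj n u v"
  shows "(\<Sum>b\<in>A - {u}. cdist n v b) \<le> (\<Sum>b\<in>A - {u}. cdist n u b)"
proof -
  have "perturbation n A (insert v (A - {u}))"
    unfolding perturbation_def using assms(3-6) by auto
  then have "W n (insert v (A - {u})) \<le> W n (insert u (A - {u}))"
    using assms(1,3) unfolding is_local_maximizer_def by (simp add: insert_absorb)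
  then show ?thesis
    using assms(2,5) double_W_insert[of "A - {u}" v n] double_W_insert[of "A - {u}" u n] by simp
qed

lemma maximizer_imp_local_maximizer:
  assumes "is_maximizer n A" "A \<subseteq> {0..<n}"
  shows "is_local_maximizer n A"
  unfolding is_local_maximizer_def
proof (intro allI impI)
  fix B assume "perturbation n A B"
  then obtain u v where uv: "u \<in> A" "v < n" "v \<notin> A" "B = insert v (A - {u})"
    unfolding perturbation_def by auto
  have "finite A" using assms(2) finite_subset by blast
  then have "card B = card A" using uv card_Suc_Diff1[of A u] by auto
  moreover have "B \<subseteq> {0..<n}" using uv assms(2) by auto
  ultimately show "W n B \<le> W n A" using assms(1) unfolding is_maximizer_def by blast
qed

lemma sum_rotate_mod:
  fixes i m :: nat
  assumes "i < m"
  shows "(\<Sum>k<m. f ((i + k) mod m)) = (\<Sum>k<m. f k)"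
proof (rule sum.reindex_bij_witness[where i="\<lambda>j. (j + (m - i)) mod m" and j="\<lambda>k. (i + k) mod m"])
  fix k assume "k \<in> {..<m}"
  have "((i + k) mod m + (m - i)) mod m = (i + k + (m - i)) mod m"
    by (simp only: mod_add_left_eq)
  also have "i + k + (m - i) = k + m" using assms by simp
  finally show "((i + k) mod m + (m - i)) mod m = k" using \<open>k \<in> {..<m}\<close> by simp
next
  fix j assume "j \<in> {..<m}"
  have "(i + (j + (m - i)) mod m) mod m = (i + (j + (m - i))) mod m"
    by (simp only: mod_add_right_eq)
  also have "i + (j + (m - i)) = j + m" using assms by simp
  finally show "(i + (j + (m - i)) mod m) mod m = j" using \<open>j \<in> {..<m}\<close> by simp
qed (use assms in auto)

text \<open>The change of the distance to a vertex at forward distance \<open>t\<close> when one steps forward.\<close>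

definition step_gain :: "nat \<Rightarrow> nat \<Rightarrow> int" where
  "step_gain n t = int (min (t - 1) (n - (t - 1))) - int (min t (n - t))"

lemma step_gain_bounds:
  assumes "t < n"
  shows "-1 \<le> step_gain n t"
    and "n + 1 \<le> 2 * t \<Longrightarrow> 0 \<le> step_gain n t"
    and "n + 2 \<le> 2 * t \<Longrightarrow> 1 \<le> step_gain n t"
  using assms by (auto simp: step_gain_def min_def)

lemma sum_sign_blocks:
  fixes h m :: nat
  assumes "1 \<le> h" "2 * h \<le> m" "m \<le> 2 * h + 1"
  shows "(\<Sum>l\<in>{1..<m}. (if l < h then -1 else if l < m - h then 0 else 1) :: int) = 1"
proof -
  define L where "L = (\<lambda>l::nat. (if l < h then -1 else if l < m - h then 0 else 1) :: int)"
  have "sum L {1..<m} = sum L {1..<h} + (sum L {h..<m - h} + sum L {m - h..<m})"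
    using assms by (simp add: sum.atLeastLessThan_concat)
  also have "sum L {1..<h} = (\<Sum>l\<in>{1..<h}. -1)" by (rule sum.cong) (auto simp: L_def)
  also have "sum L {h..<m - h} = 0" by (rule sum.neutral) (auto simp: L_def)
  also have "sum L {m - h..<m} = (\<Sum>l\<in>{m - h..<m}. 1)"
    by (rule sum.cong) (use assms in \<open>auto simp: L_def\<close>)
  finally show ?thesis unfolding L_def using assms by simp
qed

lemma mem_middle_pair_iff:
  fixes x n :: nat
  shows "x \<in> {n div 2, (n + 1) div 2} \<longleftrightarrow> n \<le> 2 * x + 1 \<and> 2 * x \<le> n + 1"
proof (cases "even n")
  case True
  then obtain q where "n = 2 * q" by blast
  then show ?thesis by simp presburger
next
  case False
  then obtain q where "n = 2 * q + 1" using oddE by blast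
  then show ?thesis by simp presburger
qed

lemma min_complement_eq_half:
  fixes x n :: nat
  assumes "n \<le> 2 * x + 1" "2 * x \<le> n + 1"
  shows "min x (n - x) = n div 2"
proof -
  have "x = n div 2 \<or> x = (n + 1) div 2" using assms mem_middle_pair_iff by simp
  then show ?thesis by (cases "even n") (auto elim!: evenE oddE)
qed

lemma mem_one_half_iff:
  fixes x n :: nat
  assumes "0 < x"
  shows "x \<in> {1..n div 2} \<longleftrightarrow> 2 * x \<le> n"
  using assms by auto

text \<open>An upper bound for \<open>\<Sum> \<sigma>\<^sub>k\<close> that holds for every \<open>m\<close>-subset of \<open>C\<^sub>n\<close>.\<close>

definition span_bound :: "nat \<Rightarrow> nat \<Rightarrow> nat \<Rightarrow> nat" where
  "span_bound n m k =
     (if 2 * k < m then k * n else if 2 * k = m then m * (n div 2) else (m - k) * n)"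

section \<open>Gaps of a subset of the cycle\<close>

locale cycle_subset =
  fixes n :: nat and A :: "nat set" and m :: nat
  assumes subset: "A \<subseteq> {0..<n}" and card_A: "card A = m" and two_le_m: "2 \<le> m"
begin

definition a :: "nat \<Rightarrow> nat" where
  "a i = sorted_list_of_set A ! i"

text \<open>Indices are extended periodically: \<open>lift j\<close> is the position of \<open>a (j mod m)\<close> on the
  universal cover of \<open>C\<^sub>n\<close> after \<open>j div m\<close> turns. Thus \<open>gap j k\<close> is \<open>d*(a\<^sub>j, a\<^sub>j\<^sub>+\<^sub>k)\<close>
  and \<open>cgap j k\<close> is \<open>d(a\<^sub>j, a\<^sub>j\<^sub>+\<^sub>k)\<close> for \<open>0 < k < m\<close>.\<close>

definition lift :: "nat \<Rightarrow> nat" where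
  "lift j = a (j mod m) + n * (j div m)"

definition gap :: "nat \<Rightarrow> nat \<Rightarrow> nat" where
  "gap j k = lift (j + k) - lift j"

definition cgap :: "nat \<Rightarrow> nat \<Rightarrow> nat" where
  "cgap j k = min (gap j k) (n - gap j k)"

lemma finite_A: "finite A"
  using subset finite_subset by blast

lemma m_le_n: "m \<le> n"
  using card_mono[OF _ subset] card_A by simp

lemma m_pos: "0 < m"
  using two_le_m by simp

lemma n_pos: "0 < n"
  using two_le_m m_le_n by simp

lemma half_m_bounds: "1 \<le> m div 2" "m div 2 < m" "2 * (m div 2) \<le> m" "m \<le> 2 * (m div 2) + 1"
  using two_le_m div_mult_mod_eq[of m 2] mod_less_divisor[of 2 m] by linarith+

lemma length_sorted_A: "length (sorted_list_of_set A) = m"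
  using card_A by simp

lemma a_less: "i < j \<Longrightarrow> j < m \<Longrightarrow> a i < a j"
  unfolding a_def
  using length_sorted_A sorted_wrt_nth_less[OF strict_sorted_list_of_set[of A], of i j] by simp

lemma a_le: "i \<le> j \<Longrightarrow> j < m \<Longrightarrow> a i \<le> a j"
  using a_less by (cases "i = j") (auto intro: less_imp_le)

lemma in_A_iff: "x \<in> A \<longleftrightarrow> (\<exists>i<m. a i = x)"
  using finite_A length_sorted_A unfolding a_def by (metis in_set_conv_nth set_sorted_list_of_set)

lemma A_eq_image: "A = a ` {..<m}"
  by (auto simp: in_A_iff)

lemma a_in_A: "i < m \<Longrightarrow> a i \<in> A"
  using in_A_iff by blast

lemma a_less_n: "i < m \<Longrightarrow> a i < n"
  using a_in_A subset by (meson atLeastLessThan_iff subsetD)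

lemma inj_on_a: "inj_on a {..<m}"
  by (rule inj_onI) (metis lessThan_iff a_less nat_neq_iff less_irrefl)

lemma sum_A: "sum g A = (\<Sum>i<m. g (a i))"
proof -
  have "sum g (a ` {..<m}) = (\<Sum>i<m. g (a i))" by (simp add: sum.reindex inj_on_a)
  then show ?thesis by (simp only: A_eq_image[symmetric])
qed

lemma idx_a:
  assumes "i < m"
  shows "idx A (a i) = i"
proof -
  have "x \<in> {x \<in> A. x < a i} \<longleftrightarrow> x \<in> a ` {..<i}" for x
  proof
    assume "x \<in> {x \<in> A. x < a i}"
    then obtain j where j: "j < m" "a j = x" "x < a i" using in_A_iff by auto
    then have "j < i" using a_le[of i j] by (meson not_le)
    then show "x \<in> a ` {..<i}" using j by blast
  next
    assume "x \<in> a ` {..<i}"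
    then obtain j where "j < i" "x = a j" by blast
    then show "x \<in> {x \<in> A. x < a i}" using assms a_in_A[of j] a_less[of j i] by simp
  qed
  then have "{x \<in> A. x < a i} = a ` {..<i}" by blast
  moreover have "inj_on a {..<i}"
    using inj_on_a assms by (meson inj_on_subset lessThan_subset_iff less_imp_le)
  ultimately show ?thesis unfolding idx_def by (simp add: card_image)
qed

lemma lift_add_m: "lift (j + m) = lift j + n"
proof -
  have "(j + m) div m = Suc (j div m)" using m_pos by (simp add: div_add_self2)
  then show ?thesis unfolding lift_def by simp
qed

lemma lift_add_mult_m: "lift (j + q * m) = lift j + q * n"
  using m_pos unfolding lift_def by (simp add: algebra_simps)

lemma lift_less_Suc: "lift j < lift (Suc j)"
proof (cases "Suc (j mod m) = m")
  case False
  then have "Suc j mod m = Suc (j mod m)" "Suc j div m = j div m" "Suc (j mod m) < m"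
    using mod_less_divisor[OF m_pos, of j] by (simp_all add: mod_Suc div_Suc)
  then show ?thesis unfolding lift_def using a_less[of "j mod m" "Suc (j mod m)"] by simp
next
  case True
  then have "Suc j mod m = 0" "Suc j div m = Suc (j div m)" "j mod m < m"
    by (simp_all add: mod_Suc div_Suc)
  then show ?thesis unfolding lift_def using a_less_n[of "j mod m"] by simp
qed

lemma strict_mono_lift: "strict_mono lift"
  using lift_less_Suc strict_mono_Suc_iff by blast

lemma lift_le: "j \<le> k \<Longrightarrow> lift j \<le> lift k"
  using strict_mono_lift strict_mono_less_eq by blast

lemma lift_mod_n: "int (lift j) mod int n = int (a (j mod m)) mod int n"
  unfolding lift_def by simp

lemma gap_add: "gap j (k + l) = gap j k + gap (j + k) l"
  unfolding gap_def using lift_le[of j "j + k"] lift_le[of "j + k" "j + k + l"]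
  by (simp add: add.assoc)

lemma gap_zero [simp]: "gap j 0 = 0"
  unfolding gap_def by simp

lemma gap_pos: "0 < k \<Longrightarrow> 0 < gap j k"
  unfolding gap_def using strict_mono_lift by (simp add: strict_mono_less)

lemma gap_less_gap: "k < l \<Longrightarrow> gap j k < gap j l"
  using gap_add[of j k "l - k"] gap_pos[of "l - k" "j + k"] by simp

lemma gap_le_gap: "k \<le> l \<Longrightarrow> gap j k \<le> gap j l"
  using gap_less_gap by (cases "k = l") (auto intro: less_imp_le)

lemma gap_m: "gap j m = n"
  unfolding gap_def using lift_add_m by simp

lemma gap_less_n: "k < m \<Longrightarrow> gap j k < n"
  using gap_less_gap gap_m by metis

lemma gap_complement: "k \<le> m \<Longrightarrow> gap (j + k) (m - k) = n - gap j k"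
  using gap_add[of j k "m - k"] gap_m by simp

lemma gap_mod: "gap (j mod m) k = gap j k"
proof -
  define q where "q = j div m"
  have j: "j mod m + q * m = j" and jk: "j mod m + k + q * m = j + k"
    unfolding q_def by simp_all
  have "lift j = lift (j mod m) + q * n"
    using lift_add_mult_m[of "j mod m" q] by (simp only: j)
  moreover have "lift (j + k) = lift (j mod m + k) + q * n"
    using lift_add_mult_m[of "j mod m + k" q] by (simp only: jk)
  ultimately show ?thesis unfolding gap_def by simp
qed

lemma all_index_gap_iff: "(\<forall>i<m. P (gap i k)) \<longleftrightarrow> (\<forall>i. P (gap i k))"
proof
  assume "\<forall>i<m. P (gap i k)"
  then have "P (gap (i mod m) k)" for i using m_pos by simp
  then show "\<forall>i. P (gap i k)" by (simp add: gap_mod)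
qed simp

lemma a_add_mod_n:
  assumes "i < m"
  shows "int (a ((i + l) mod m)) mod int n = (int (a i) + int (gap i l)) mod int n"
proof -
  have "int (lift (i + l)) = int (a i) + int (gap i l)"
    unfolding gap_def using lift_le[of i "i + l"] assms by (simp add: lift_def)
  then show ?thesis using lift_mod_n[of "i + l"] by simp
qed

lemma dstar_a:
  assumes "i < m" "k < m"
  shows "dstar n (a i) (a ((i + k) mod m)) = gap i k"
  using assms by (intro dstar_eqI gap_less_n a_add_mod_n)

lemma cdist_a:
  assumes "i < m" "0 < k" "k < m"
  shows "cdist n (a i) (a ((i + k) mod m)) = cgap i k"
proof -
  have forward: "dstar n (a i) (a ((i + k) mod m)) = gap i k" using assms by (simp add: dstar_a)
  then have "dstar n (a ((i + k) mod m)) (a i) = n - gap i k"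
    using dstar_swap[OF n_pos, of "a i" "a ((i + k) mod m)"] gap_pos[OF assms(2)] by simp
  then show ?thesis unfolding cdist_def cgap_def forward by simp
qed

lemma sum_lift_shift: "(\<Sum>i<m. lift (i + k)) = (\<Sum>i<m. lift i) + k * n"
proof (induction k)
  case (Suc k)
  have "(\<Sum>i<m. lift (i + Suc k)) + lift k = (\<Sum>i<m. lift (i + k)) + lift (m + k)"
    using sum.lessThan_Suc_shift[of "\<lambda>i. lift (i + k)" m] sum.lessThan_Suc[of "\<lambda>i. lift (i + k)" m]
    by simp
  then show ?case using Suc lift_add_m[of k] by (simp add: add.commute)
qed simp

lemma sum_gap: "(\<Sum>i<m. gap i k) = k * n"
proof -
  have "(\<Sum>i<m. gap i k) = (\<Sum>i<m. lift (i + k)) - (\<Sum>i<m. lift i)"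
    unfolding gap_def by (rule sum_subtractf_nat) (simp add: lift_le)
  then show ?thesis using sum_lift_shift by simp
qed

lemma sum_gap_complement:
  assumes "k < m"
  shows "(\<Sum>i<m. n - gap i k) = m * n - k * n"
proof -
  have "(\<Sum>i<m. n - gap i k) = (\<Sum>i<m. n) - (\<Sum>i<m. gap i k)"
    by (rule sum_subtractf_nat) (use gap_less_n assms in \<open>auto intro: less_imp_le\<close>)
  then show ?thesis using sum_gap by simp
qed

lemma sum_A_remove:
  fixes f :: "nat \<Rightarrow> 'b :: cancel_comm_monoid_add"
  assumes "i < m"
  shows "(\<Sum>b\<in>A - {a i}. f b) = (\<Sum>l\<in>{1..<m}. f (a ((i + l) mod m)))"
proof -
  have indices: "{..<m} = insert 0 {1..<m}" using m_pos by auto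
  have "f (a i) + (\<Sum>b\<in>A - {a i}. f b) = sum f A"
    by (rule sum.remove[OF finite_A a_in_A[OF assms], symmetric])
  also have "\<dots> = (\<Sum>l<m. f (a ((i + l) mod m)))"
    using sum_rotate_mod[OF assms, of "\<lambda>j. f (a j)"] by (simp add: sum_A)
  also have "\<dots> = f (a i) + (\<Sum>l\<in>{1..<m}. f (a ((i + l) mod m)))"
    unfolding indices using assms by simp
  finally show ?thesis by simp
qed

lemma double_W_eq_sum_cgap: "2 * W n A = (\<Sum>k\<in>{1..<m}. \<Sum>i<m. cgap i k)"
proof -
  have row: "(\<Sum>b\<in>A. cdist n (a i) b) = (\<Sum>k\<in>{1..<m}. cgap i k)" if "i < m" for i
  proof -
    have "(\<Sum>b\<in>A. cdist n (a i) b) = (\<Sum>b\<in>A - {a i}. cdist n (a i) b)"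
      using sum.remove[OF finite_A a_in_A[OF that], of "cdist n (a i)"] by simp
    also have "\<dots> = (\<Sum>k\<in>{1..<m}. cdist n (a i) (a ((i + k) mod m)))"
      by (rule sum_A_remove[OF that])
    also have "\<dots> = (\<Sum>k\<in>{1..<m}. cgap i k)"
      using that by (intro sum.cong) (auto simp: cdist_a)
    finally show ?thesis .
  qed
  have "2 * W n A = (\<Sum>i<m. \<Sum>b\<in>A. cdist n (a i) b)"
    unfolding double_W[OF finite_A] by (rule sum_A)
  also have "\<dots> = (\<Sum>i<m. \<Sum>k\<in>{1..<m}. cgap i k)"
    using row by simp
  also have "\<dots> = (\<Sum>k\<in>{1..<m}. \<Sum>i<m. cgap i k)" by (rule sum.swap)
  finally show ?thesis .
qed

lemma span_a:
  assumes "i < m" "1 \<le> k" "k < m"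
  shows "span A (a i) (a ((i + k) mod m)) = k"
proof -
  have "(int ((i + k) mod m) - int i) mod int m = (int i + int k - int i) mod int m"
    by (simp add: of_nat_mod mod_diff_left_eq)
  then show ?thesis unfolding span_def using idx_a assms card_A by (simp add: Let_def)
qed

lemma span_pairs_eq:
  assumes "1 \<le> k" "k < m"
  shows "span_pairs A k = (\<lambda>i. (a i, a ((i + k) mod m))) ` {..<m}"
proof
  show "(\<lambda>i. (a i, a ((i + k) mod m))) ` {..<m} \<subseteq> span_pairs A k"
  proof clarify
    fix i assume i: "i < m"
    have "i \<noteq> (i + k) mod m"
    proof (cases "i + k < m")
      case False
      then have "(i + k) mod m = i + k - m" using i assms by (simp add: le_mod_geq)
      then show ?thesis using assms False by simp
    qed (use assms in simp)
    moreover have j: "(i + k) mod m < m" using m_pos by simp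
    ultimately have "a i \<noteq> a ((i + k) mod m)"
      using i inj_onD[OF inj_on_a, of i "(i + k) mod m"] by auto
    then show "(a i, a ((i + k) mod m)) \<in> span_pairs A k"
      unfolding span_pairs_def using i j a_in_A span_a[OF i assms] by simp
  qed
next
  show "span_pairs A k \<subseteq> (\<lambda>i. (a i, a ((i + k) mod m))) ` {..<m}"
  proof clarify
    fix u v assume "(u, v) \<in> span_pairs A k"
    then have uv: "u \<in> A" "v \<in> A" "span A u v = k" unfolding span_pairs_def by auto
    obtain i j where ij: "i < m" "j < m" "u = a i" "v = a j"
      using uv(1,2) by (auto simp: in_A_iff)
    define r where "r = nat ((int j - int i) mod int m)"
    have "span A u v = (if r = 0 then m else r)"
      unfolding span_def r_def using ij idx_a card_A by (simp add: Let_def)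
    then have "r = k" using uv assms by (auto split: if_splits)
    then have residue: "(int j - int i) mod int m = int k"
      unfolding r_def using assms(1) m_pos by (simp add: nat_eq_iff split: if_splits)
    have "int j = int j mod int m" using ij by simp
    also have "\<dots> = (int i + (int j - int i)) mod int m" by simp
    also have "\<dots> = (int i + int k) mod int m" using residue by (metis mod_add_right_eq)
    also have "\<dots> = int ((i + k) mod m)" by (simp only: zmod_int of_nat_add)
    finally have "j = (i + k) mod m" by (simp only: of_nat_eq_iff)
    then show "(u, v) \<in> (\<lambda>i. (a i, a ((i + k) mod m))) ` {..<m}" using ij by auto
  qed
qed

lemma image_mset_span_pairs:
  assumes "1 \<le> k" "k < m"
  shows "image_mset (\<lambda>(u, v). f u v) (mset_set (span_pairs A k))
         = image_mset (\<lambda>i. f (a i) (a ((i + k) mod m))) (mset_set {..<m})"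
proof -
  have "inj_on (\<lambda>i. (a i, a ((i + k) mod m))) {..<m}"
    using inj_on_a by (auto simp: inj_on_def)
  then show ?thesis
    unfolding span_pairs_eq[OF assms] by (simp add: image_mset_mset_set[symmetric] multiset.map_comp o_def)
qed

lemma sigma_eq_cgap:
  assumes "1 \<le> k" "k < m"
  shows "sigma n A k = image_mset (\<lambda>i. cgap i k) (mset_set {..<m})"
  unfolding sigma_def image_mset_span_pairs[OF assms]
  using assms by (intro image_mset_cong) (simp add: cdist_a)

lemma sigma_star_eq_gap:
  assumes "1 \<le> k" "k < m"
  shows "sigma_star n A k = image_mset (\<lambda>i. gap i k) (mset_set {..<m})"
  unfolding sigma_star_def image_mset_span_pairs[OF assms]
  using assms by (intro image_mset_cong) (simp add: dstar_a)

section \<open>The upper bound and when it is attained\<close>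

lemma sum_cgap_le_span_bound:
  assumes "k < m"
  shows "(\<Sum>i<m. cgap i k) \<le> span_bound n m k"
proof -
  consider "2 * k < m" | "2 * k = m" | "m < 2 * k" by linarith
  then show ?thesis
  proof cases
    case 1
    have "(\<Sum>i<m. cgap i k) \<le> (\<Sum>i<m. gap i k)" by (rule sum_mono) (simp add: cgap_def)
    then show ?thesis using 1 sum_gap unfolding span_bound_def by simp
  next
    case 2
    have "(\<Sum>i<m. cgap i k) \<le> (\<Sum>i<m. n div 2)" by (rule sum_mono) (simp add: cgap_def)
    then show ?thesis using 2 unfolding span_bound_def by simp
  next
    case 3
    have "(\<Sum>i<m. cgap i k) \<le> (\<Sum>i<m. n - gap i k)" by (rule sum_mono) (simp add: cgap_def)
    then show ?thesis
      using 3 sum_gap_complement assms unfolding span_bound_def by (simp add: diff_mult_distrib)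
  qed
qed

lemma double_W_le_span_bound: "2 * W n A \<le> (\<Sum>k\<in>{1..<m}. span_bound n m k)"
  unfolding double_W_eq_sum_cgap by (rule sum_mono) (simp add: sum_cgap_le_span_bound)

text \<open>Condition (4) of the theorem, in terms of gaps.\<close>

definition gaps_balanced :: bool where
  "gaps_balanced \<longleftrightarrow> (\<forall>i k. 1 \<le> k \<and> 2 * k < m \<longrightarrow> 2 * gap i k \<le> n) \<and>
     (even m \<longrightarrow> (\<forall>i. cgap i (m div 2) = n div 2))"

lemma sum_cgap_eq_span_bound:
  assumes "gaps_balanced" "1 \<le> k" "k < m"
  shows "(\<Sum>i<m. cgap i k) = span_bound n m k"
proof -
  have short: "2 * gap i l \<le> n" if "1 \<le> l" "2 * l < m" for i l
    using assms(1) that unfolding gaps_balanced_def by blast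
  consider "2 * k < m" | "2 * k = m" | "m < 2 * k" by linarith
  then show ?thesis
  proof cases
    case 1
    then have "cgap i k = gap i k" for i
      using short[of k i] assms(2) unfolding cgap_def by (simp add: min_def)
    then show ?thesis using 1 sum_gap unfolding span_bound_def by simp
  next
    case 2
    then have "cgap i k = n div 2" for i using assms(1) unfolding gaps_balanced_def by auto
    then show ?thesis using 2 unfolding span_bound_def by simp
  next
    case 3
    have "1 \<le> m - k" "2 * (m - k) < m" using 3 assms(3) by auto
    then have "cgap i k = n - gap i k" for i
      using short[of "m - k" "i + k"] gap_complement[of k i] gap_less_n[OF assms(3), of i] 3
      unfolding cgap_def by (simp add: min_def; linarith)
    then show ?thesis
      using 3 sum_gap_complement assms unfolding span_bound_def by (simp add: diff_mult_distrib)
  qed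
qed

lemma maximizer_if_gaps_balanced:
  assumes "gaps_balanced"
  shows "is_maximizer n A"
  unfolding is_maximizer_def
proof (intro allI impI)
  fix B assume B: "B \<subseteq> {0..<n} \<and> card B = card A"
  interpret B: cycle_subset n B m using B card_A two_le_m by unfold_locales auto
  have "2 * W n B \<le> (\<Sum>k\<in>{1..<m}. span_bound n m k)" by (rule B.double_W_le_span_bound)
  also have "\<dots> = 2 * W n A"
    unfolding double_W_eq_sum_cgap using sum_cgap_eq_span_bound[OF assms] by simp
  finally show "W n B \<le> W n A" by simp
qed

section \<open>Local maximizers have no long half-span gaps\<close>

definition long_half_gap :: "nat \<Rightarrow> bool" where
  "long_half_gap i \<longleftrightarrow>
     (if odd m then n < 2 * gap i (m div 2) else n + 2 \<le> 2 * gap i (m div 2))"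

lemma long_half_gap_mod: "long_half_gap (i mod m) = long_half_gap i"
  unfolding long_half_gap_def using gap_mod by simp

lemma next_vertex_notin_A:
  assumes "i < m" "2 \<le> gap i 1"
  shows "(a i + 1) mod n \<notin> A"
proof
  assume "(a i + 1) mod n \<in> A"
  then obtain j where j: "j < m" "a j = (a i + 1) mod n" by (auto simp: in_A_iff)
  define l where "l = (j + (m - i)) mod m"
  have "(i + l) mod m = (j + m) mod m"
    unfolding l_def using assms(1) by (simp add: mod_add_right_eq)
  then have l: "l < m" "(i + l) mod m = j" unfolding l_def using j m_pos by auto
  have "int (a j) mod int n = (int (a i) + 1) mod int n"
    using j(2) by (simp add: of_nat_mod add.commute)
  then have "dstar n (a i) (a j) = 1"
    by (intro dstar_eqI) (use m_le_n two_le_m in simp_all)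
  then have "gap i l = 1" using dstar_a[OF assms(1) l(1)] l(2) by simp
  moreover have "gap i 1 \<le> gap i l"
    using gap_le_gap[of 1 l i] \<open>gap i l = 1\<close> by (cases "l = 0") auto
  ultimately show False using assms(2) by simp
qed

lemma cdist_next_vertex:
  assumes "i < m" "2 \<le> gap i 1" "1 \<le> l" "l < m"
  shows "cdist n ((a i + 1) mod n) (a ((i + l) mod m)) =
         min (gap i l - 1) (n - (gap i l - 1))"
proof -
  have ge2: "2 \<le> gap i l" using assms(2) gap_le_gap[OF assms(3), of i] by linarith
  have forward: "dstar n ((a i + 1) mod n) (a ((i + l) mod m)) = gap i l - 1"
  proof (rule dstar_eqI)
    show "gap i l - 1 < n" using gap_less_n[OF assms(4), of i] by simp
    have "int (a ((i + l) mod m)) mod int n = (int (a i) + int (gap i l)) mod int n"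
      by (rule a_add_mod_n[OF assms(1)])
    also have "int (a i) + int (gap i l) = (int (a i) + 1) + int (gap i l - 1)" using ge2 by simp
    also have "(int (a i) + 1 + int (gap i l - 1)) mod int n
        = (int ((a i + 1) mod n) + int (gap i l - 1)) mod int n"
      by (simp only: zmod_int of_nat_add of_nat_1 mod_add_left_eq)
    finally show "int (a ((i + l) mod m)) mod int n
        = (int ((a i + 1) mod n) + int (gap i l - 1)) mod int n" .
  qed
  then have "dstar n (a ((i + l) mod m)) ((a i + 1) mod n) = n - (gap i l - 1)"
    using dstar_swap[OF n_pos, of "(a i + 1) mod n" "a ((i + l) mod m)"] ge2 by simp
  then show ?thesis unfolding cdist_def forward by simp
qed

lemma step_gain_lower_if_long:
  assumes "long_half_gap i" "1 \<le> l" "l < m"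
  shows "(if l < m div 2 then -1 else if l < m - m div 2 then 0 else 1) \<le> step_gain n (gap i l)"
proof -
  have t: "gap i l < n" using gap_less_n assms(3) by simp
  have half_le: "m div 2 \<le> l \<Longrightarrow> gap i (m div 2) \<le> gap i l" by (rule gap_le_gap)
  have half_less: "m div 2 < l \<Longrightarrow> gap i (m div 2) < gap i l" by (rule gap_less_gap)
  consider "l < m div 2" | "m div 2 \<le> l" "l < m - m div 2" | "m - m div 2 \<le> l" by linarith
  then show ?thesis
  proof cases
    case 1
    then show ?thesis using step_gain_bounds(1)[OF t] by simp
  next
    case 2
    then have "n + 1 \<le> 2 * gap i l"
      using assms(1) half_le unfolding long_half_gap_def by (auto split: if_splits)
    then show ?thesis using step_gain_bounds(2)[OF t] 2 by simp
  next
    case 3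
    have "n + 2 \<le> 2 * gap i l"
    proof (cases "odd m")
      case True
      then have "m div 2 < l" using 3 odd_two_times_div_two_succ[of m] by linarith
      then show ?thesis using assms(1) True half_less unfolding long_half_gap_def by simp
    next
      case False
      have "m div 2 \<le> l" using 3 False even_two_times_div_two[of m] by linarith
      then show ?thesis using assms(1) False half_le unfolding long_half_gap_def by simp
    qed
    then show ?thesis using step_gain_bounds(3)[OF t] 3 by simp
  qed
qed

text \<open>If \<open>a\<^sub>i + 1\<close> were free, moving \<open>a\<^sub>i\<close> there would change \<open>W\<close> by \<open>\<Sum>\<^sub>l step_gain n (g\<^sub>i(l)) \<ge> 1\<close>.\<close>

lemma next_vertex_in_A_if_long:
  assumes "is_local_maximizer n A" "i < m" "long_half_gap i"
  shows "gap i 1 = 1"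
proof (rule ccontr)
  assume "gap i 1 \<noteq> 1"
  then have ge2: "2 \<le> gap i 1" using gap_pos[of 1 i] by simp
  define v where "v = (a i + 1) mod n"
  have "cyc_adj n (a i) v" unfolding cyc_adj_def v_def by simp
  then have "(\<Sum>b\<in>A - {a i}. cdist n v b) \<le> (\<Sum>b\<in>A - {a i}. cdist n (a i) b)"
    using local_maximizer_move[OF assms(1) finite_A a_in_A[OF assms(2)]] n_pos
      next_vertex_notin_A[OF assms(2) ge2]
    unfolding v_def by simp
  moreover have "(\<Sum>b\<in>A - {a i}. cdist n v b)
      = (\<Sum>l\<in>{1..<m}. min (gap i l - 1) (n - (gap i l - 1)))"
    unfolding sum_A_remove[OF assms(2)] v_def
    using cdist_next_vertex[OF assms(2) ge2] by (intro sum.cong) auto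
  moreover have "(\<Sum>b\<in>A - {a i}. cdist n (a i) b) = (\<Sum>l\<in>{1..<m}. min (gap i l) (n - gap i l))"
    unfolding sum_A_remove[OF assms(2)]
    using cdist_a[OF assms(2)] unfolding cgap_def by (intro sum.cong) auto
  ultimately have "(\<Sum>l\<in>{1..<m}. min (gap i l - 1) (n - (gap i l - 1)))
             \<le> (\<Sum>l\<in>{1..<m}. min (gap i l) (n - gap i l))"
    by simp
  then have "(\<Sum>l\<in>{1..<m}. int (min (gap i l - 1) (n - (gap i l - 1))))
             \<le> (\<Sum>l\<in>{1..<m}. int (min (gap i l) (n - gap i l)))"
    by (simp only: of_nat_sum[symmetric] of_nat_le_iff)
  then have "(\<Sum>l\<in>{1..<m}. step_gain n (gap i l)) \<le> 0"
    unfolding step_gain_def by (simp add: sum_subtractf)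
  moreover have "(\<Sum>l\<in>{1..<m}. (if l < m div 2 then -1 else if l < m - m div 2 then 0 else 1) :: int)
      \<le> (\<Sum>l\<in>{1..<m}. step_gain n (gap i l))"
    by (rule sum_mono) (use step_gain_lower_if_long[OF assms(3)] in auto)
  ultimately show False using sum_sign_blocks[OF half_m_bounds(1,3,4)] by simp
qed

lemma long_half_gap_Suc:
  assumes "long_half_gap i" "gap i 1 = 1"
  shows "long_half_gap (Suc i)"
proof -
  have "gap i (1 + m div 2) = gap i (m div 2 + 1)" by (simp add: add.commute)
  then have "1 + gap (Suc i) (m div 2) = gap i (m div 2) + gap (i + m div 2) 1"
    using gap_add[of i 1 "m div 2"] gap_add[of i "m div 2" 1] assms(2) by simp
  then have "gap i (m div 2) \<le> gap (Suc i) (m div 2)" using gap_pos[of 1 "i + m div 2"] by simp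
  then show ?thesis using assms(1) unfolding long_half_gap_def by (auto split: if_splits)
qed

lemma long_half_gap_everywhere:
  assumes "is_local_maximizer n A" "long_half_gap i"
  shows "long_half_gap j"
proof -
  have from_i: "long_half_gap (i + t)" for t
  proof (induction t)
    case (Suc t)
    then have "gap ((i + t) mod m) 1 = 1"
      using next_vertex_in_A_if_long[OF assms(1)] long_half_gap_mod m_pos by simp
    then show ?case using Suc long_half_gap_Suc gap_mod by simp
  qed (use assms(2) in simp)
  have "i \<le> j + i * m" using m_pos by (simp add: trans_le_add2)
  then have "long_half_gap (j + i * m)"
    using from_i[of "j + i * m - i"] by simp
  then show ?thesis by (metis long_half_gap_mod mod_mult_self1)
qed

lemma no_long_half_gap:
  assumes "is_local_maximizer n A"
  shows "\<not> long_half_gap i"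
proof
  assume "long_half_gap i"
  then have all_long: "long_half_gap j" for j by (rule long_half_gap_everywhere[OF assms])
  show False
  proof (cases "odd m")
    case True
    then have "(\<Sum>j<m. n) < (\<Sum>j<m. 2 * gap j (m div 2))"
      using all_long m_pos unfolding long_half_gap_def by (intro sum_strict_mono) auto
    moreover have "(\<Sum>j<m. 2 * gap j (m div 2)) = 2 * (m div 2) * n"
      by (simp add: sum_distrib_left[symmetric] sum_gap)
    ultimately show False using half_m_bounds(3) by simp
  next
    case False
    then have "(\<Sum>j<m. n + 2) \<le> (\<Sum>j<m. 2 * gap j (m div 2))"
      using all_long unfolding long_half_gap_def by (intro sum_mono) auto
    moreover have "(\<Sum>j<m. 2 * gap j (m div 2)) = m * n"
      using False by (simp add: sum_distrib_left[symmetric] sum_gap mult.assoc[symmetric])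
    ultimately show False using m_pos by simp
  qed
qed

text \<open>Condition (3) of the theorem, in terms of gaps.\<close>

definition half_gaps_balanced :: bool where
  "half_gaps_balanced \<longleftrightarrow>
     (odd m \<longrightarrow> (\<forall>i. 2 * gap i (m div 2) \<le> n)) \<and>
     (even m \<longrightarrow> (\<forall>i. n \<le> 2 * gap i (m div 2) + 1 \<and> 2 * gap i (m div 2) \<le> n + 1))"

lemma half_gaps_balanced_if_local_maximizer:
  assumes "is_local_maximizer n A"
  shows "half_gaps_balanced"
  unfolding half_gaps_balanced_def
proof (intro conjI impI allI)
  fix i assume "odd m"
  then show "2 * gap i (m div 2) \<le> n"
    using no_long_half_gap[OF assms, of i] unfolding long_half_gap_def by simp
next
  fix i assume even: "even m"
  have "m - m div 2 = m div 2" using even_two_times_div_two[OF even] by linarith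
  then have complement: "gap (i + m div 2) (m div 2) = n - gap i (m div 2)"
    using gap_complement[of "m div 2" i] by simp
  have "2 * gap i (m div 2) \<le> n + 1" "2 * gap (i + m div 2) (m div 2) \<le> n + 1"
    using even no_long_half_gap[OF assms, of i] no_long_half_gap[OF assms, of "i + m div 2"]
    unfolding long_half_gap_def by auto
  then show "n \<le> 2 * gap i (m div 2) + 1" "2 * gap i (m div 2) \<le> n + 1"
    using complement gap_less_n[OF half_m_bounds(2), of i] by auto
qed

lemma gaps_balanced_if_half_gaps_balanced:
  assumes "half_gaps_balanced"
  shows "gaps_balanced"
  unfolding gaps_balanced_def
proof (intro conjI impI allI)
  fix i k assume k: "1 \<le> k \<and> 2 * k < m"
  show "2 * gap i k \<le> n"
  proof (cases "odd m")
    case True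
    then have "gap i k \<le> gap i (m div 2)"
      using k odd_two_times_div_two_succ[OF True] by (intro gap_le_gap) linarith
    moreover have "2 * gap i (m div 2) \<le> n"
      using assms True unfolding half_gaps_balanced_def by blast
    ultimately show ?thesis by linarith
  next
    case False
    then have "gap i k < gap i (m div 2)"
      using k False even_two_times_div_two[of m] by (intro gap_less_gap) auto
    moreover have "2 * gap i (m div 2) \<le> n + 1"
      using assms False unfolding half_gaps_balanced_def by blast
    ultimately show ?thesis by linarith
  qed
next
  fix i assume "even m"
  then have "n \<le> 2 * gap i (m div 2) + 1" "2 * gap i (m div 2) \<le> n + 1"
    using assms unfolding half_gaps_balanced_def by auto
  then show "cgap i (m div 2) = n div 2"
    unfolding cgap_def by (rule min_complement_eq_half)
qed

lemma sigma_eq_sigma_star_iff: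
  assumes "1 \<le> k" "2 * k < m"
  shows "sigma n A k = sigma_star n A k \<longleftrightarrow> (\<forall>i. 2 * gap i k \<le> n)"
proof
  have k: "1 \<le> k" "k < m" using assms by auto
  assume "sigma n A k = sigma_star n A k"
  then have "sum_mset (sigma n A k) = sum_mset (sigma_star n A k)" by simp
  then have sums: "(\<Sum>i<m. cgap i k) = (\<Sum>i<m. gap i k)"
    unfolding sigma_eq_cgap[OF k] sigma_star_eq_gap[OF k] by (simp only: sum_unfold_sum_mset)
  have agree: "cgap i k = gap i k" if "i < m" for i
    by (rule sum_mono_inv[OF sums]) (use that in \<open>auto simp: cgap_def\<close>)
  have "2 * gap i k \<le> n" if "i < m" for i
    using agree[OF that] gap_less_n[OF k(2), of i] unfolding cgap_def
    by (simp add: min_def split: if_splits)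
  then show "\<forall>i. 2 * gap i k \<le> n" using all_index_gap_iff[of "\<lambda>x. 2 * x \<le> n" k] by blast
next
  assume short: "\<forall>i. 2 * gap i k \<le> n"
  have "cgap i k = gap i k" for i
    using short[rule_format, of i] unfolding cgap_def by (simp add: min_def)
  then show "sigma n A k = sigma_star n A k" using sigma_eq_cgap sigma_star_eq_gap assms by simp
qed

lemma set_sigma_half:
  "set_mset (sigma n A (m div 2)) = (\<lambda>i. cgap i (m div 2)) ` {..<m}"
  using sigma_eq_cgap[OF half_m_bounds(1,2)] by simp

lemma set_sigma_star_half:
  "set_mset (sigma_star n A (m div 2)) = (\<lambda>i. gap i (m div 2)) ` {..<m}"
  using sigma_star_eq_gap[OF half_m_bounds(1,2)] by simp

lemma condition4_iff_gaps_balanced: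
  "((\<forall>k::nat. 1 \<le> k \<and> 2 * k < m \<longrightarrow> sigma n A k = sigma_star n A k)
    \<and> (even m \<longrightarrow> set_mset (sigma n A (m div 2)) = {n div 2})) \<longleftrightarrow> gaps_balanced"
proof -
  have "(\<lambda>i. cgap i (m div 2)) ` {..<m} = {n div 2} \<longleftrightarrow> (\<forall>i<m. cgap i (m div 2) = n div 2)"
    using m_pos by auto
  also have "\<dots> \<longleftrightarrow> (\<forall>i. cgap i (m div 2) = n div 2)"
    unfolding cgap_def by (rule all_index_gap_iff)
  finally show ?thesis
    unfolding gaps_balanced_def set_sigma_half using sigma_eq_sigma_star_iff by auto
qed

lemma condition3_iff_half_gaps_balanced:
  "((odd m \<longrightarrow> set_mset (sigma_star n A (m div 2)) \<subseteq> {1..n div 2})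
    \<and> (even m \<longrightarrow> set_mset (sigma_star n A (m div 2)) \<subseteq> {n div 2, (n + 1) div 2}))
   \<longleftrightarrow> half_gaps_balanced"
proof -
  have subset_iff: "set_mset (sigma_star n A (m div 2)) \<subseteq> S \<longleftrightarrow> (\<forall>i. gap i (m div 2) \<in> S)" for S
  proof -
    have "set_mset (sigma_star n A (m div 2)) \<subseteq> S \<longleftrightarrow> (\<forall>i<m. gap i (m div 2) \<in> S)"
      unfolding set_sigma_star_half by auto
    also have "\<dots> \<longleftrightarrow> (\<forall>i. gap i (m div 2) \<in> S)"
      by (rule all_index_gap_iff[of "\<lambda>x. x \<in> S"])
    finally show ?thesis .
  qed
  have pos: "0 < gap i (m div 2)" for i using gap_pos half_m_bounds(1) by simp
  show ?thesis
    unfolding half_gaps_balanced_def subset_iff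
    by (simp only: mem_one_half_iff pos mem_middle_pair_iff)
qed

end

theorem mainTheorem13:
  fixes n m :: nat and A :: "nat set"
  assumes "n \<ge> 3" and "A \<subseteq> {0..<n}" and "card A = m" and "2 \<le> m" and "m \<le> n"
  shows "(is_maximizer n A \<longleftrightarrow> is_local_maximizer n A)
    \<and> (is_local_maximizer n A \<longleftrightarrow>
        ((odd m \<longrightarrow> set_mset (sigma_star n A (m div 2)) \<subseteq> {1..n div 2})
         \<and> (even m \<longrightarrow> set_mset (sigma_star n A (m div 2)) \<subseteq> {n div 2, (n + 1) div 2})))
    \<and> (is_local_maximizer n A \<longleftrightarrow>
        ((\<forall>k::nat. 1 \<le> k \<and> 2 * k < m \<longrightarrow> sigma n A k = sigma_star n A k)
         \<and> (even m \<longrightarrow> set_mset (sigma n A (m div 2)) = {n div 2})))"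
proof -
  interpret cycle_subset n A m using assms by unfold_locales auto
  have "is_maximizer n A \<Longrightarrow> is_local_maximizer n A"
    and "is_local_maximizer n A \<Longrightarrow> half_gaps_balanced"
    and "half_gaps_balanced \<Longrightarrow> gaps_balanced"
    and "gaps_balanced \<Longrightarrow> is_maximizer n A"
    using maximizer_imp_local_maximizer[OF _ assms(2)] half_gaps_balanced_if_local_maximizer
      gaps_balanced_if_half_gaps_balanced maximizer_if_gaps_balanced by blast+
  then show ?thesis
    unfolding condition3_iff_half_gaps_balanced condition4_iff_gaps_balanced by blast
qed

end
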